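(* Let $B,B^*,C,C_2>0$ and $q_1\in\mathbb{R}$ be constants, and let $\{\rho'_L\}_{L\in\mathbb{R}_+}$ be positive numbers with $\lim_{L\to\infty}\rho'_L=0$ and $\lim_{L\to\infty}\rho'_L\sqrt L=\infty$. For $L>1$ define $p_{0,L}=1-\frac1L$, $Z_{0,L}=\ln\frac{p_{0,L}}{1-p_{0,L}}$, $A_L=Z_{0,L}/2$, $$\varepsilon_L=\exp\Big\{\frac{B}{p_{0,L}}\Big[-\frac{L\rho'_L}{C}+\Big(\frac1C-\frac{p_{0,L}}{B}+\frac{3(1-p_{0,L})}{2B^*}\Big)Z_{0,L}+q_1\Big]\Big\},$$ and let $p_{1,L}\in\Big[0,\frac{e^{-Z_{0,L}}-\varepsilon_Le^{-C_2}}{e^{-A_L}-\varepsilon_Le^{-C_2}}\Big]$. Let $\{W_L\}$ be random variables whose expectations satisfy $$p_{0,L}(1-p_{1,L})\mathbb{E}(W_L)=-\frac{p_{0,L}\ln\varepsilon_L}{B}+\frac{\ln(\exp(L(C-\rho'_L))-1)}{C}+\Big[\frac1C-\frac{p_{0,L}}{B}+\frac{1-p_{0,L}}{B^*}\Big]Z_{0,L}+\frac{(1-p_{0,L})|A_L|}{B^*}+q_1.$$ Then $\liminf_{L\to\infty}-\frac{\ln\varepsilon_L}{L\rho'_L}\ge\frac BC$, and $\mathbb{E}(W_L)\le L+3\sqrt L$ for all sufficiently large $L$. *)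

theory Defs
  imports "HOL-Probability.Probability"
begin

definition p0 :: "real \<Rightarrow> real" where
  "p0 L = 1 - 1 / L"

definition Z0 :: "real \<Rightarrow> real" where
  "Z0 L = ln (p0 L / (1 - p0 L))"

definition AL :: "real \<Rightarrow> real" where
  "AL L = Z0 L / 2"

definition epsL :: "real \<Rightarrow> real \<Rightarrow> real \<Rightarrow> real \<Rightarrow> (real \<Rightarrow> real) \<Rightarrow> real \<Rightarrow> real" where
  "epsL B Bs C q1 \<rho> L =
     exp ((B / p0 L) * (- (L * \<rho> L) / C
        + (1 / C - p0 L / B + 3 * (1 - p0 L) / (2 * Bs)) * Z0 L + q1))"

end

theory Submission
  imports Defs "HOL-Real_Asymp.Real_Asymp"
begin

text \<open>Since Z0 L = ln (L - 1) grows more slowly than sqrt L while \<rho> L * sqrt L \<rightarrow> \<infinity>,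
  the Z0 and q1 terms of ln \<epsilon> are negligible against L * \<rho> L, so
  - ln \<epsilon> / (L * \<rho> L) \<rightarrow> B / C. In particular \<epsilon> < exp (- A) = 1 / sqrt (L - 1) eventually,
  which forces p1 L \<le> 1 / sqrt (L - 1). In the equation for E(W) all Z0 and q1 terms cancel,
  leaving p0 (1 - p1) E(W) \<le> L, and (1 - 1/L) (1 - 1/sqrt (L - 1)) (1 + 3/sqrt L) \<ge> 1
  for large L gives the bound.\<close>

lemma Z0_eq_ln: "L > 1 \<Longrightarrow> Z0 L = ln (L - 1)"
  by (simp add: Z0_def p0_def field_simps)

lemma exp_minus_AL: "L > 1 \<Longrightarrow> exp (- AL L) = 1 / sqrt (L - 1)"
  by (simp add: AL_def Z0_eq_ln exp_minus ln_sqrt[symmetric] inverse_eq_divide)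

lemma ln_epsL:
  "ln (epsL B Bs C q1 \<rho> L) =
     B / p0 L * (- (L * \<rho> L) / C + (1 / C - p0 L / B + 3 * (1 - p0 L) / (2 * Bs)) * Z0 L + q1)"
  by (simp add: epsL_def)

lemma div_L_mult_tendsto_0:
  fixes g \<rho> :: "real \<Rightarrow> real"
  assumes g: "((\<lambda>L. g L / sqrt L) \<longlongrightarrow> 0) at_top"
    and \<rho>: "filterlim (\<lambda>L. \<rho> L * sqrt L) at_top at_top"
  shows "((\<lambda>L. g L / (L * \<rho> L)) \<longlongrightarrow> 0) at_top"
proof -
  have "((\<lambda>L. g L / sqrt L * inverse (\<rho> L * sqrt L)) \<longlongrightarrow> 0 * 0) at_top"
    using g tendsto_inverse_0_at_top[OF \<rho>] by (rule tendsto_mult)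
  moreover have "\<forall>\<^sub>F L in at_top. g L / sqrt L * inverse (\<rho> L * sqrt L) = g L / (L * \<rho> L)"
    using eventually_ge_at_top[of 0]
    by eventually_elim (simp add: field_simps flip: real_sqrt_mult)
  ultimately show ?thesis
    by (simp add: tendsto_cong)
qed

lemma Z0_div_L_mult_tendsto_0:
  fixes \<rho> :: "real \<Rightarrow> real"
  assumes "filterlim (\<lambda>L. \<rho> L * sqrt L) at_top at_top"
  shows "((\<lambda>L. Z0 L / (L * \<rho> L)) \<longlongrightarrow> 0) at_top"
proof -
  have "((\<lambda>L::real. ln (L - 1) / sqrt L) \<longlongrightarrow> 0) at_top"
    by real_asymp
  then have "((\<lambda>L. Z0 L / sqrt L) \<longlongrightarrow> 0) at_top"
    by (rule Lim_transform_eventually)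
       (use eventually_gt_at_top[of 1] in eventually_elim, simp add: Z0_eq_ln)
  then show ?thesis
    using assms by (rule div_L_mult_tendsto_0)
qed

lemma eventually_pos_if_mult_sqrt_at_top:
  fixes \<rho> :: "real \<Rightarrow> real"
  assumes "filterlim (\<lambda>L. \<rho> L * sqrt L) at_top at_top"
  shows "\<forall>\<^sub>F L in at_top. \<rho> L > 0"
proof -
  have "\<forall>\<^sub>F L in at_top. 0 < \<rho> L * sqrt L"
    using assms unfolding filterlim_at_top_dense by blast
  then show ?thesis
    using eventually_gt_at_top[of 0] by eventually_elim (simp add: zero_less_mult_iff)
qed

lemma epsL_rate_tendsto:
  fixes \<rho> :: "real \<Rightarrow> real"
  assumes \<rho>: "filterlim (\<lambda>L. \<rho> L * sqrt L) at_top at_top"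
  shows "((\<lambda>L. - ln (epsL B Bs C q1 \<rho> L) / (L * \<rho> L)) \<longlongrightarrow> B / C) at_top"
proof -
  define K where "K L = 1 / C - p0 L * (1 / B) + (1 - p0 L) * (3 / (2 * Bs))" for L
  have p0: "(p0 \<longlongrightarrow> 1) at_top"
    unfolding p0_def by real_asymp
  have q1: "((\<lambda>L. q1 / (L * \<rho> L)) \<longlongrightarrow> 0) at_top"
    using tendsto_divide_0[OF tendsto_const filterlim_at_top_imp_at_infinity[OF sqrt_at_top]] \<rho>
    by (rule div_L_mult_tendsto_0)
  have "(K \<longlongrightarrow> 1 / C - 1 * (1 / B) + (1 - 1) * (3 / (2 * Bs))) at_top"
    unfolding K_def by (intro tendsto_intros p0)
  then have K: "(K \<longlongrightarrow> 1 / C - 1 / B) at_top"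
    by simp
  have "((\<lambda>L. B / p0 L * (1 / C - K L * (Z0 L / (L * \<rho> L)) - q1 / (L * \<rho> L)))
          \<longlongrightarrow> B / 1 * (1 / C - (1 / C - 1 / B) * 0 - 0)) at_top"
    by (intro tendsto_intros p0 K q1 Z0_div_L_mult_tendsto_0 \<rho>) simp
  moreover have "\<forall>\<^sub>F L in at_top.
      B / p0 L * (1 / C - K L * (Z0 L / (L * \<rho> L)) - q1 / (L * \<rho> L))
        = - ln (epsL B Bs C q1 \<rho> L) / (L * \<rho> L)"
    using eventually_pos_if_mult_sqrt_at_top[OF \<rho>] eventually_gt_at_top[of 0]
  proof eventually_elim
    case (elim L)
    have cancel: "a \<noteq> 0 \<Longrightarrow> X * (1 / C - k * (z / a) - q1 / a) = - (X * (- a / C + k * z + q1)) / a"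
      for a X k z :: real
      by (simp add: divide_simps) (simp add: algebra_simps)
    have "ln (epsL B Bs C q1 \<rho> L) = B / p0 L * (- (L * \<rho> L) / C + K L * Z0 L + q1)"
      by (simp add: ln_epsL K_def)
    then show ?case
      using elim by (simp only:) (rule cancel, simp)
  qed
  ultimately show ?thesis
    by (simp add: Lim_transform_eventually)
qed

lemma eventually_epsL_less_exp_minus_AL:
  fixes B Bs C q1 :: real and \<rho> :: "real \<Rightarrow> real"
  assumes "B > 0" "C > 0"
    and \<rho>: "filterlim (\<lambda>L. \<rho> L * sqrt L) at_top at_top"
  shows "\<forall>\<^sub>F L in at_top. epsL B Bs C q1 \<rho> L < exp (- AL L)"
proof -
  have "((\<lambda>L. - ln (epsL B Bs C q1 \<rho> L) / (L * \<rho> L) - Z0 L / (L * \<rho> L) / 2)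
          \<longlongrightarrow> B / C - 0 / 2) at_top"
    using epsL_rate_tendsto[OF \<rho>]
    by (rule tendsto_diff) (rule tendsto_divide[OF Z0_div_L_mult_tendsto_0[OF \<rho>] tendsto_const], simp)
  then have "\<forall>\<^sub>F L in at_top. 0 < - ln (epsL B Bs C q1 \<rho> L) / (L * \<rho> L) - Z0 L / (L * \<rho> L) / 2"
    by (rule order_tendstoD(1)) (use assms in simp)
  then show ?thesis
    using eventually_pos_if_mult_sqrt_at_top[OF \<rho>] eventually_gt_at_top[of 0]
  proof eventually_elim
    case (elim L)
    then have "ln (epsL B Bs C q1 \<rho> L) < - AL L"
      by (simp add: AL_def field_simps)
    then show ?case
      by (metis exp_less_cancel_iff exp_ln epsL_def exp_gt_zero)
  qed
qed

lemma diff_divide_diff_le: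
  fixes b x :: real
  assumes "0 \<le> x" "x < b" "b \<le> 1"
  shows "(b * b - x) / (b - x) \<le> b"
proof -
  have "b * x \<le> x"
    using assms by (simp add: mult_left_le_one_le)
  then show ?thesis
    using assms by (simp add: divide_le_eq algebra_simps)
qed

lemma le_inverse_sqrt_if_le_ratio:
  fixes e c p :: real
  assumes "L \<ge> 2" "0 \<le> e" "e < exp (- AL L)" "c \<ge> 0"
    and "p \<le> (exp (- Z0 L) - e * exp (- c)) / (exp (- AL L) - e * exp (- c))"
  shows "p \<le> 1 / sqrt (L - 1)"
proof -
  have "exp (- Z0 L) = exp (- AL L) * exp (- AL L)"
    by (simp add: AL_def flip: exp_add)
  moreover have "e * exp (- c) \<le> e"
    using assms by (intro mult_left_le) auto
  moreover have "exp (- AL L) \<le> 1"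
    using assms by (simp add: exp_minus_AL)
  ultimately have "p \<le> exp (- AL L)"
    using assms diff_divide_diff_le[of "e * exp (- c)" "exp (- AL L)"] by simp
  then show ?thesis
    using assms by (simp add: exp_minus_AL)
qed

lemma ln_exp_minus_one_le:
  fixes t :: real
  assumes "0 < t"
  shows "ln (exp t - 1) \<le> t"
proof -
  have "0 < exp t - 1"
    using assms by simp
  then show ?thesis
    using ln_le_cancel_iff[of "exp t - 1" "exp t"] by simp
qed

lemma expectation_rhs_eq:
  assumes "L \<ge> 2" "B \<noteq> 0"
  shows "- p0 L * ln (epsL B Bs C q1 \<rho> L) / B
          + ln (exp (L * (C - \<rho> L)) - 1) / C
          + (1 / C - p0 L / B + (1 - p0 L) / Bs) * Z0 L
          + (1 - p0 L) * \<bar>AL L\<bar> / Bs + q1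
       = L * \<rho> L / C + ln (exp (L * (C - \<rho> L)) - 1) / C"
proof -
  define r where "r = (1 - p0 L) / Bs"
  define u where "u = 1 / C - p0 L / B"
  have "p0 L \<noteq> 0"
    using assms by (simp add: p0_def)
  then have "- p0 L * (B / p0 L * X) / B = - X" for X
    using assms by simp
  moreover have "\<bar>AL L\<bar> = Z0 L / 2"
    using assms by (simp add: AL_def Z0_eq_ln)
  moreover have "3 * (1 - p0 L) / (2 * Bs) = 3 / 2 * r" "(1 - p0 L) * (Z0 L / 2) / Bs = r * Z0 L / 2"
    by (simp_all add: r_def)
  moreover have "- (- (L * \<rho> L) / C + (u + 3 / 2 * r) * Z0 L + q1) + l / C + (u + r) * Z0 L
                  + r * Z0 L / 2 + q1 = L * \<rho> L / C + l / C" for l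
    by (simp add: algebra_simps)
  ultimately show ?thesis
    unfolding ln_epsL by (simp only: flip: r_def u_def add.assoc)
qed

lemma expectation_le_L_plus_3_sqrt:
  fixes E p :: real
  assumes L: "L \<ge> 2" and "B \<noteq> 0" "C > 0" "\<rho> L < C"
    and p: "p \<le> 1 / sqrt (L - 1)"
    and E: "p0 L * (1 - p) * E =
          - p0 L * ln (epsL B Bs C q1 \<rho> L) / B
          + ln (exp (L * (C - \<rho> L)) - 1) / C
          + (1 / C - p0 L / B + (1 - p0 L) / Bs) * Z0 L
          + (1 - p0 L) * \<bar>AL L\<bar> / Bs + q1"
    and large: "1 \<le> (1 - 1 / L) * (1 - 1 / sqrt (L - 1)) * (1 + 3 / sqrt L)"
  shows "E \<le> L + 3 * sqrt L"
proof -
  define d where "d = p0 L * (1 - p)"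
  have "d * E = L * \<rho> L / C + ln (exp (L * (C - \<rho> L)) - 1) / C"
    using E expectation_rhs_eq[OF L \<open>B \<noteq> 0\<close>] by (simp add: d_def)
  also have "\<dots> \<le> L * \<rho> L / C + L * (C - \<rho> L) / C"
    using ln_exp_minus_one_le[of "L * (C - \<rho> L)"] assms by (simp add: divide_right_mono)
  also have "\<dots> = L"
    using \<open>C > 0\<close> by (simp add: field_simps)
  finally have dE: "d * E \<le> L" .
  have "(1 - 1 / L) * (1 - 1 / sqrt (L - 1)) \<le> d"
    unfolding d_def p0_def using p L by (intro mult_left_mono) auto
  then have d: "1 \<le> d * (1 + 3 / sqrt L)"
    using large L by (smt (verit) mult_right_mono divide_nonneg_nonneg real_sqrt_ge_zero)
  then have "d > 0"
    using L by (smt (verit) divide_nonneg_nonneg mult_nonpos_nonneg real_sqrt_ge_zero)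
  then have "E \<le> L / d"
    using dE by (simp add: le_divide_eq mult.commute)
  also have "\<dots> \<le> L * (1 + 3 / sqrt L)"
    using d \<open>d > 0\<close> L by (simp add: divide_le_eq mult.commute mult.left_commute)
  also have "\<dots> = L + 3 * sqrt L"
    using L by (simp add: field_simps real_sqrt_mult[symmetric])
  finally show ?thesis .
qed

theorem lemma4:
  fixes B Bs C C2 q1 :: real
    and \<rho> :: "real \<Rightarrow> real"
    and p1 :: "real \<Rightarrow> real"
    and M :: "real \<Rightarrow> 'a measure"
    and W :: "real \<Rightarrow> 'a \<Rightarrow> real"
  assumes "B > 0" "Bs > 0" "C > 0" "C2 > 0"
    and rho_pos: "\<And>L. L > 0 \<Longrightarrow> \<rho> L > 0"
    and rho_lim: "(\<rho> \<longlongrightarrow> 0) at_top"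
    and rho_sqrt: "filterlim (\<lambda>L. \<rho> L * sqrt L) at_top at_top"
    and p1_range: "\<And>L. L > 1 \<Longrightarrow> 0 \<le> p1 L \<and>
        p1 L \<le> (exp (- Z0 L) - epsL B Bs C q1 \<rho> L * exp (- C2)) /
                 (exp (- AL L) - epsL B Bs C q1 \<rho> L * exp (- C2))"
    and W_rv: "\<And>L. L > 1 \<Longrightarrow> prob_space (M L) \<and> W L \<in> borel_measurable (M L)
                                 \<and> integrable (M L) (W L)"
    and W_exp: "\<And>L. L > 1 \<Longrightarrow>
        p0 L * (1 - p1 L) * (\<integral>\<omega>. W L \<omega> \<partial>M L) =
          - p0 L * ln (epsL B Bs C q1 \<rho> L) / B
          + ln (exp (L * (C - \<rho> L)) - 1) / C
          + (1 / C - p0 L / B + (1 - p0 L) / Bs) * Z0 L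
          + (1 - p0 L) * \<bar>AL L\<bar> / Bs + q1"
  shows "Liminf at_top (\<lambda>L. ereal (- ln (epsL B Bs C q1 \<rho> L) / (L * \<rho> L))) \<ge> ereal (B / C)
         \<and> (\<forall>\<^sub>F L in at_top. (\<integral>\<omega>. W L \<omega> \<partial>M L) \<le> L + 3 * sqrt L)"
proof
  have "((\<lambda>L. ereal (- ln (epsL B Bs C q1 \<rho> L) / (L * \<rho> L))) \<longlongrightarrow> ereal (B / C)) at_top"
    using epsL_rate_tendsto[OF rho_sqrt] by (rule tendsto_ereal)
  then show "Liminf at_top (\<lambda>L. ereal (- ln (epsL B Bs C q1 \<rho> L) / (L * \<rho> L))) \<ge> ereal (B / C)"
    using lim_imp_Liminf[OF trivial_limit_at_top_linorder] by (metis order_refl)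
  have large: "\<forall>\<^sub>F L in at_top. 1 \<le> (1 - 1 / L) * (1 - 1 / sqrt (L - 1)) * (1 + 3 / sqrt L)"
    by real_asymp
  show "\<forall>\<^sub>F L in at_top. (\<integral>\<omega>. W L \<omega> \<partial>M L) \<le> L + 3 * sqrt L"
    using eventually_ge_at_top[of 2] order_tendstoD(2)[OF rho_lim \<open>C > 0\<close>]
      eventually_epsL_less_exp_minus_AL[of B C \<rho> Bs q1, OF \<open>B > 0\<close> \<open>C > 0\<close> rho_sqrt] large
  proof eventually_elim
    case (elim L)
    then have "p1 L \<le> 1 / sqrt (L - 1)"
      using p1_range[of L] \<open>C2 > 0\<close>
      by (intro le_inverse_sqrt_if_le_ratio[where e = "epsL B Bs C q1 \<rho> L" and c = C2])
         (auto simp: epsL_def)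
    moreover have "B \<noteq> 0" "L > 1"
      using \<open>B > 0\<close> elim by auto
    ultimately show ?case
      using elim expectation_le_L_plus_3_sqrt[OF _ _ \<open>C > 0\<close> _ _ W_exp] by blast
  qed
qed

end
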